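(* $$\sum_{n=1}^\infty \frac{H_n \binom{2n}{n}}{n(n+1)^2\, 2^{2n}} = \frac{2\pi^2}{3} + 4(\log 2)^2 - 12\log 2.$$
   Context: $H_n=\sum_{k=1}^n \frac{1}{k}$ denotes the $n$-th harmonic number and $\binom{2n}{n}$ the central binomial coefficient; $\log$ is the natural logarithm. *)

theory Defs
  imports "HOL-Analysis.Analysis"
begin

end

(*
  Let c n = (2n choose n) / 4^n and h n = c n * H n.  The recurrence (n+1) c (n+1) = (n+1/2) c n
  gives first-order linear ODEs for the generating functions C and H of c and h, namely
  2 (1-x) C' = C and 2 (1-x) x H' = x H + 2 (C - 1).  The substitution x = 4w/(1+w)^2 makes
  sqrt (1-x) = (1-w)/(1+w) rational, and the ODEs integrate to C = (1+w)/(1-w) and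
  H = -2 (1+w)/(1-w) ln (1-w).  Integrating H termwise expresses the generating functions of
  h n / n, h n / (n+1) and h n / (n+1)^2 through logarithms, Li2 w and Li2 (w^2).  The coefficients
  are nonnegative, so letting w tend to 1 from below yields their sums pi^2/3, 4 ln 2 and
  8 ln 2 - 4 (ln 2)^2 - pi^2/3, and 1/(n (n+1)^2) = 1/n - 1/(n+1) - 1/(n+1)^2 concludes.
*)

theory Submission
  imports Defs "HOL-Real_Asymp.Real_Asymp"
begin

section \<open>Real power series on the unit interval\<close>

definition power_series :: "(nat \<Rightarrow> real) \<Rightarrow> real \<Rightarrow> real" where
  "power_series a x = (\<Sum>n. a n * x ^ n)"

lemma power_series_0 [simp]: "power_series a 0 = a 0"
  by (simp add: power_series_def)

lemma ereal_norm_less_conv_radius: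
  fixes a :: "nat \<Rightarrow> real" and x :: real
  assumes "1 \<le> conv_radius a" "\<bar>x\<bar> < 1"
  shows "ereal (norm x) < conv_radius a"
proof -
  have "ereal (norm x) < 1" using assms(2) by (simp add: one_ereal_def)
  also note assms(1)
  finally show ?thesis .
qed

lemma sums_power_series:
  fixes a :: "nat \<Rightarrow> real"
  assumes "1 \<le> conv_radius a" "\<bar>x\<bar> < 1"
  shows "(\<lambda>n. a n * x ^ n) sums power_series a x"
  unfolding power_series_def
  by (intro summable_sums summable_in_conv_radius ereal_norm_less_conv_radius assms)

lemma conv_radius_ge_1I:
  assumes "\<And>x. \<bar>x\<bar> < 1 \<Longrightarrow> summable (\<lambda>n. a n * x ^ n)"
  shows "1 \<le> conv_radius (a :: nat \<Rightarrow> real)"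
  by (rule conv_radius_geI_ex') (use assms in auto)

lemma conv_radius_ge_1_const: "1 \<le> conv_radius (\<lambda>_. 1 :: real)"
  by (rule conv_radius_ge_1I) simp

lemma conv_radius_diffs_ge_1:
  fixes a :: "nat \<Rightarrow> real"
  assumes "1 \<le> conv_radius a"
  shows "1 \<le> conv_radius (diffs a)"
  by (rule conv_radius_ge_1I, rule termdiff_converges[of _ 1])
     (use sums_power_series[OF assms] in \<open>auto simp: sums_iff\<close>)

lemma conv_radius_ge_1_mono:
  fixes a b :: "nat \<Rightarrow> real"
  assumes "\<And>n. \<bar>b n\<bar> \<le> \<bar>a n\<bar>" "1 \<le> conv_radius a"
  shows "1 \<le> conv_radius b"
proof (rule conv_radius_ge_1I)
  fix x :: real assume x: "\<bar>x\<bar> < 1"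
  have "summable (\<lambda>n. norm (a n * x ^ n))"
    by (intro abs_summable_in_conv_radius ereal_norm_less_conv_radius assms(2) x)
  then show "summable (\<lambda>n. b n * x ^ n)"
    by (rule summable_comparison_test'[where N = 0]) (simp add: abs_mult mult_right_mono assms(1))
qed

lemma conv_radius_ge_1_divide:
  fixes a d :: "nat \<Rightarrow> real"
  assumes "1 \<le> conv_radius a" "\<And>n. d n = 0 \<or> 1 \<le> \<bar>d n\<bar>"
  shows "1 \<le> conv_radius (\<lambda>n. a n / d n)"
proof (rule conv_radius_ge_1_mono[OF _ assms(1)])
  show "\<bar>a n / d n\<bar> \<le> \<bar>a n\<bar>" for n
    using assms(2)[of n] by (auto simp: abs_divide divide_le_eq mult_le_cancel_left1)
qed

lemma has_real_derivative_power_series: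
  fixes a :: "nat \<Rightarrow> real"
  assumes "1 \<le> conv_radius a" "\<bar>x\<bar> < 1"
  shows "(power_series a has_real_derivative power_series (diffs a) x) (at x)"
  unfolding power_series_def[abs_def]
  by (intro has_field_derivative_powser ereal_norm_less_conv_radius assms)

lemma has_real_derivative_power_series_comp:
  assumes "1 \<le> conv_radius a" "\<bar>f x\<bar> < 1" "(f has_real_derivative f') (at x)"
  shows "((\<lambda>x. power_series a (f x)) has_real_derivative power_series (diffs a) (f x) * f') (at x)"
  using DERIV_chain2[OF has_real_derivative_power_series[OF assms(1,2)] assms(3)] .

lemma sums_power_series_mult_of_nat:
  assumes "1 \<le> conv_radius a" "\<bar>x\<bar> < 1"
  shows "(\<lambda>n. real n * a n * x ^ n) sums (x * power_series (diffs a) x)"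
proof -
  have "(\<lambda>n. diffs a n * x ^ n * x) sums (power_series (diffs a) x * x)"
    by (intro sums_mult2 sums_power_series conv_radius_diffs_ge_1 assms)
  then have "(\<lambda>n. real (Suc n) * a (Suc n) * x ^ Suc n) sums (x * power_series (diffs a) x)"
    by (simp add: diffs_def algebra_simps)
  then show ?thesis by (subst (asm) sums_Suc_iff) simp
qed

lemma sums_power_series_Suc:
  assumes "1 \<le> conv_radius a" "\<bar>x\<bar> < 1"
  shows "(\<lambda>n. a (Suc n) * x ^ Suc n) sums (power_series a x - a 0)"
  using sums_power_series[OF assms] by (subst sums_Suc_iff) simp

lemma has_real_derivative_mult_power_series_divide_Suc:
  fixes a :: "nat \<Rightarrow> real"
  assumes a: "1 \<le> conv_radius a" and "\<bar>f x\<bar> < 1" and f: "(f has_real_derivative f') (at x)"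
  shows "((\<lambda>x. f x * power_series (\<lambda>n. a n / (real n + 1)) (f x)) has_real_derivative
           power_series a (f x) * f') (at x)"
proof -
  let ?b = "\<lambda>n. a n / (real n + 1)"
  have b: "1 \<le> conv_radius ?b"
    by (rule conv_radius_ge_1_divide[OF a]) simp
  have "(\<lambda>n. ?b n * f x ^ n + real n * ?b n * f x ^ n) = (\<lambda>n. a n * f x ^ n)"
  proof
    fix n
    have "?b n * f x ^ n + real n * ?b n * f x ^ n = ((real n + 1) * ?b n) * f x ^ n"
      by (simp only: distrib_right mult_1)
    also have "(real n + 1) * ?b n = a n" by simp
    finally show "?b n * f x ^ n + real n * ?b n * f x ^ n = a n * f x ^ n" .
  qed
  moreover have "(\<lambda>n. ?b n * f x ^ n + real n * ?b n * f x ^ n)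
                   sums (power_series ?b (f x) + f x * power_series (diffs ?b) (f x))"
    by (intro sums_add sums_power_series sums_power_series_mult_of_nat b \<open>\<bar>f x\<bar> < 1\<close>)
  ultimately have sum: "power_series ?b (f x) + f x * power_series (diffs ?b) (f x) = power_series a (f x)"
    using sums_power_series[OF a \<open>\<bar>f x\<bar> < 1\<close>] by (simp add: sums_iff)
  have "((\<lambda>x. f x * power_series ?b (f x)) has_real_derivative
      f' * power_series ?b (f x) + power_series (diffs ?b) (f x) * f' * f x) (at x)"
    by (intro DERIV_mult f has_real_derivative_power_series_comp b \<open>\<bar>f x\<bar> < 1\<close>)
  moreover have "f' * power_series ?b (f x) + power_series (diffs ?b) (f x) * f' * f x =
                   power_series a (f x) * f'"
    unfolding sum[symmetric] by (simp add: algebra_simps)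
  ultimately show ?thesis by simp
qed

lemma mult_power_series_diffs_divide_of_nat:
  fixes a :: "nat \<Rightarrow> real"
  assumes a: "1 \<le> conv_radius a" and "a 0 = 0" "\<bar>x\<bar> < 1"
  shows "x * power_series (diffs (\<lambda>n. a n / real n)) x = power_series a x"
proof -
  have b: "1 \<le> conv_radius (\<lambda>n. a n / real n)"
    by (rule conv_radius_ge_1_divide[OF a]) auto
  have "(\<lambda>n. real n * (a n / real n) * x ^ n) = (\<lambda>n. a n * x ^ n)"
  proof
    show "real n * (a n / real n) * x ^ n = a n * x ^ n" for n
      using \<open>a 0 = 0\<close> by (cases n) auto
  qed
  then have "(\<lambda>n. a n * x ^ n) sums (x * power_series (diffs (\<lambda>n. a n / real n)) x)"
    using sums_power_series_mult_of_nat[OF b \<open>\<bar>x\<bar> < 1\<close>] by simp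
  then show ?thesis
    using sums_power_series[OF a \<open>\<bar>x\<bar> < 1\<close>] by (rule sums_unique2)
qed

lemma power_series_nonneg:
  assumes "\<And>n. 0 \<le> a n" "1 \<le> conv_radius a" "0 \<le> x" "x < 1"
  shows "0 \<le> power_series a x"
  unfolding power_series_def
  using assms sums_power_series[OF assms(2), of x] by (intro suminf_nonneg) (auto simp: sums_iff)

lemma tendsto_ennreal_power_series_at_left_1:
  assumes "\<And>n. 0 \<le> a n" "1 \<le> conv_radius a"
  shows "((\<lambda>z. ennreal (power_series a z)) \<longlongrightarrow> (\<Sum>n. ennreal (a n))) (at_left 1)"
  unfolding power_series_def
  by (rule power_series_tendsto_at_left[OF assms(1)])
     (use sums_power_series[OF assms(2)] in \<open>auto simp: sums_iff\<close>)

lemma tendsto_power_series_at_left_1: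
  fixes a :: "nat \<Rightarrow> real"
  assumes nonneg: "\<And>n. 0 \<le> a n" and "summable a"
  shows "(power_series a \<longlongrightarrow> suminf a) (at_left 1)"
proof (rule tendsto_ennrealD)
  have conv: "1 \<le> conv_radius a"
    using conv_radius_geI[of a 1] \<open>summable a\<close> by (simp add: one_ereal_def)
  have "((\<lambda>z. ennreal (power_series a z)) \<longlongrightarrow> (\<Sum>n. ennreal (a n))) (at_left 1)"
    by (rule tendsto_ennreal_power_series_at_left_1[OF nonneg conv])
  then show "((\<lambda>z. ennreal (power_series a z)) \<longlongrightarrow> ennreal (suminf a)) (at_left 1)"
    using suminf_ennreal2[OF nonneg \<open>summable a\<close>] by simp
  have "\<forall>\<^sub>F z in at_left 1. z \<in> {0<..<(1::real)}"
    by (rule eventually_at_left_real) simp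
  then show "\<forall>\<^sub>F z in at_left 1. 0 \<le> power_series a z"
    by eventually_elim (auto intro: power_series_nonneg[OF nonneg conv])
  show "0 \<le> suminf a" by (rule suminf_nonneg[OF \<open>summable a\<close> nonneg])
qed

lemma nonneg_power_series_sums_if_tendsto:
  fixes a :: "nat \<Rightarrow> real"
  assumes nonneg: "\<And>n. 0 \<le> a n" and conv: "1 \<le> conv_radius a"
    and Y: "filterlim Y (at_left 1) F" and "F \<noteq> bot"
    and lim: "((\<lambda>t. power_series a (Y t)) \<longlongrightarrow> L) F"
  shows "a sums L"
proof -
  \<comment> \<open>in \<open>ennreal\<close>, monotone convergence identifies the Abel limit with the sum\<close>
  have "((\<lambda>z. ennreal (power_series a z)) \<longlongrightarrow> (\<Sum>n. ennreal (a n))) (at_left 1)"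
    by (rule tendsto_ennreal_power_series_at_left_1[OF nonneg conv])
  then have "((\<lambda>t. ennreal (power_series a (Y t))) \<longlongrightarrow> (\<Sum>n. ennreal (a n))) F"
    by (rule filterlim_compose[OF _ Y])
  moreover have "((\<lambda>t. ennreal (power_series a (Y t))) \<longlongrightarrow> ennreal L) F"
    using lim by (rule tendsto_ennrealI)
  ultimately have "(\<Sum>n. ennreal (a n)) = ennreal L"
    using \<open>F \<noteq> bot\<close> tendsto_unique by blast
  then have "(\<lambda>n. ennreal (a n)) sums ennreal L"
    using summable_sums[OF summableI, of "\<lambda>n. ennreal (a n)"] by simp
  moreover have "0 \<le> L"
  proof (rule tendsto_lowerbound[OF lim _ \<open>F \<noteq> bot\<close>])
    have "\<forall>\<^sub>F z in at_left 1. z \<in> {0<..<(1::real)}"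
      by (rule eventually_at_left_real) simp
    then have "\<forall>\<^sub>F t in F. Y t \<in> {0<..<1}"
      using Y by (auto simp: filterlim_iff)
    then show "\<forall>\<^sub>F t in F. 0 \<le> power_series a (Y t)"
      by eventually_elim (auto intro: power_series_nonneg[OF nonneg conv])
  qed
  ultimately show ?thesis using nonneg by simp
qed

lemma DERIV_eq_imp_eq_on_Ico:
  fixes f g :: "real \<Rightarrow> real"
  assumes f: "\<And>w. a \<le> w \<Longrightarrow> w < b \<Longrightarrow> (f has_real_derivative f' w) (at w)"
    and g: "\<And>w. a \<le> w \<Longrightarrow> w < b \<Longrightarrow> (g has_real_derivative g' w) (at w)"
    and eq: "\<And>w. a < w \<Longrightarrow> w < b \<Longrightarrow> f' w = g' w"
    and "f a = g a" "a \<le> w" "w < b"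
  shows "f w = g w"
proof (cases "a = w")
  case False
  define h where "h w = f w - g w" for w
  have h: "(h has_real_derivative f' v - g' v) (at v)" if "a \<le> v" "v < b" for v
    unfolding h_def[abs_def] using that by (intro DERIV_diff f g)
  have "h w = h a"
  proof (rule DERIV_isconst_end[where f = h])
    show "continuous_on {a..w} h"
      using \<open>w < b\<close> by (intro continuous_at_imp_continuous_on ballI DERIV_isCont[OF h]) auto
    show "(h has_real_derivative 0) (at v)" if "a < v" "v < w" for v
      using h[of v] eq[of v] that \<open>w < b\<close> by simp
  qed (use False \<open>a \<le> w\<close> in auto)
  with \<open>f a = g a\<close> show ?thesis by (simp add: h_def)
qed (use \<open>f a = g a\<close> in simp)

section \<open>Logarithm and dilogarithm\<close>

lemma mult_power_series_inverse_Suc: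
  assumes "0 \<le> x" "x < 1"
  shows "x * power_series (\<lambda>n. 1 / (real n + 1)) x = - ln (1 - x)"
proof (rule DERIV_eq_imp_eq_on_Ico[of 0 1 "\<lambda>x. x * power_series (\<lambda>n. 1 / (real n + 1)) x"
      "\<lambda>x. 1 / (1 - x)" "\<lambda>x. - ln (1 - x)" "\<lambda>x. 1 / (1 - x)"])
  show "((\<lambda>x. x * power_series (\<lambda>n. 1 / (real n + 1)) x) has_real_derivative 1 / (1 - v)) (at v)"
    if "0 \<le> v" "v < 1" for v
  proof -
    have "power_series (\<lambda>_. 1) v = 1 / (1 - v)"
      using that by (simp add: power_series_def suminf_geometric)
    then show ?thesis
      using has_real_derivative_mult_power_series_divide_Suc[OF conv_radius_ge_1_const,
          of "\<lambda>x. x" v 1] that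
      by simp
  qed
  show "((\<lambda>x. - ln (1 - x)) has_real_derivative 1 / (1 - v)) (at v)" if "0 \<le> v" "v < 1" for v
    using that by (auto intro!: derivative_eq_intros simp: divide_simps)
qed (use assms in auto)

lemma mult_power_series_inverse_Suc_square:
  assumes "0 \<le> w" "w < 1"
  shows "w^2 * power_series (\<lambda>n. 1 / (real n + 1)) (w^2) = - ln (1 - w) - ln (1 + w)"
proof -
  have "w^2 < 1" using assms by (simp add: abs_square_less_1)
  then have "w^2 * power_series (\<lambda>n. 1 / (real n + 1)) (w^2) = - ln ((1 - w) * (1 + w))"
    using mult_power_series_inverse_Suc[of "w^2"] by (simp add: power2_eq_square algebra_simps)
  also have "\<dots> = - ln (1 - w) - ln (1 + w)" using assms by (simp add: ln_mult)
  finally show ?thesis .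
qed

text \<open>The coefficient for \<open>n = 0\<close> is \<open>1 / 0 = 0\<close>, as it should be.\<close>

definition dilog :: "real \<Rightarrow> real" where
  "dilog x = power_series (\<lambda>n. 1 / real n ^ 2) x"

lemma dilog_0 [simp]: "dilog 0 = 0"
  by (simp add: dilog_def)

lemma conv_radius_inverse_square: "1 \<le> conv_radius (\<lambda>n. 1 / real n ^ 2)"
proof (rule conv_radius_ge_1_divide[OF conv_radius_ge_1_const])
  show "real n ^ 2 = 0 \<or> 1 \<le> \<bar>real n ^ 2\<bar>" for n
    by (cases n) (auto intro: one_le_power)
qed

lemma has_real_derivative_dilog:
  assumes "\<bar>x\<bar> < 1"
  shows "(dilog has_real_derivative power_series (\<lambda>n. 1 / (real n + 1)) x) (at x)"
proof -
  have "diffs (\<lambda>n. 1 / real n ^ 2) = (\<lambda>n. 1 / (real n + 1))"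
    by (rule ext) (simp add: diffs_def power2_eq_square add.commute)
  then show ?thesis
    using has_real_derivative_power_series[OF conv_radius_inverse_square assms]
    by (simp add: dilog_def[abs_def])
qed

lemma inverse_square_of_nat_sums: "(\<lambda>n. 1 / real n ^ 2) sums (pi^2 / 6)"
proof -
  have "(\<lambda>n. 1 / real (Suc n) ^ 2) sums (pi^2 / 6)"
    using inverse_squares_sums by (simp add: add.commute)
  then show ?thesis by (subst (asm) sums_Suc_iff) simp
qed

lemma tendsto_dilog_at_left_1: "(dilog \<longlongrightarrow> pi^2 / 6) (at_left 1)"
proof -
  have "(power_series (\<lambda>n. 1 / real n ^ 2) \<longlongrightarrow> (\<Sum>n. 1 / real n ^ 2)) (at_left 1)"
    by (rule tendsto_power_series_at_left_1)
       (auto intro: sums_summable[OF inverse_square_of_nat_sums])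
  then show ?thesis
    by (simp add: dilog_def[abs_def] sums_unique[OF inverse_square_of_nat_sums, symmetric])
qed

section \<open>Central binomial coefficients weighted by harmonic numbers\<close>

definition central_binomial_ratio :: "nat \<Rightarrow> real" where
  "central_binomial_ratio n = real (2 * n choose n) / 4 ^ n"

definition harm_central_binomial :: "nat \<Rightarrow> real" where
  "harm_central_binomial n = central_binomial_ratio n * harm n"

lemma central_binomial_ratio_0 [simp]: "central_binomial_ratio 0 = 1"
  by (simp add: central_binomial_ratio_def)

lemma Suc_times_central_binomial:
  "Suc n * (2 * Suc n choose Suc n) = 2 * (2 * n + 1) * (2 * n choose n)"
proof -
  have "Suc n * (2 * Suc n choose Suc n) = 2 * Suc n * (Suc (2 * n) choose n)"
    using Suc_times_binomial[of n "Suc (2 * n)"] by simp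
  also have "Suc (2 * n) choose n = Suc (2 * n) choose Suc n"
    using binomial_symmetric[of n "Suc (2 * n)"] by (simp add: Suc_diff_le)
  also have "2 * Suc n * (Suc (2 * n) choose Suc n) = 2 * (2 * n + 1) * (2 * n choose n)"
    using Suc_times_binomial[of n "2 * n"] by (simp only: mult.assoc) simp
  finally show ?thesis .
qed

lemma central_binomial_ratio_Suc:
  "real (Suc n) * central_binomial_ratio (Suc n) = (real n + 1 / 2) * central_binomial_ratio n"
proof -
  have "real (Suc n) * real (2 * Suc n choose Suc n) = 2 * (2 * real n + 1) * real (2 * n choose n)"
    using arg_cong[OF Suc_times_central_binomial, of real]
    by (simp only: of_nat_mult of_nat_add of_nat_numeral of_nat_1)
  then show ?thesis
    unfolding central_binomial_ratio_def by (simp add: field_simps)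
qed

lemma central_binomial_ratio_nonneg: "0 \<le> central_binomial_ratio n"
  by (simp add: central_binomial_ratio_def)

lemma central_binomial_ratio_le_1: "central_binomial_ratio n \<le> 1"
proof -
  have "real (2 * n choose n) \<le> 2 ^ (2 * n)"
    by (metis binomial_le_pow2 of_nat_le_iff of_nat_numeral of_nat_power)
  then show ?thesis by (simp add: central_binomial_ratio_def power_mult)
qed

lemma harm_le: "harm n \<le> (real n :: real)"
proof (induction n)
  case (Suc n)
  have "inverse (real (Suc n)) \<le> 1" by (simp add: inverse_le_1_iff)
  with Suc show ?case by (simp add: harm_Suc)
qed (simp add: harm_def)

lemma harm_central_binomial_0 [simp]: "harm_central_binomial 0 = 0"
  by (simp add: harm_central_binomial_def harm_def)

lemma harm_central_binomial_nonneg: "0 \<le> harm_central_binomial n"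
  by (simp add: harm_central_binomial_def central_binomial_ratio_nonneg harm_nonneg)

lemma harm_central_binomial_le: "harm_central_binomial n \<le> real n"
  using mult_mono[OF central_binomial_ratio_le_1 harm_le] harm_nonneg[where 'a = real]
  by (simp add: harm_central_binomial_def)

lemma diffs_central_binomial_ratio:
  "diffs central_binomial_ratio n = (real n + 1 / 2) * central_binomial_ratio n"
  using central_binomial_ratio_Suc[of n] by (simp add: diffs_def)

lemma diffs_harm_central_binomial:
  "diffs harm_central_binomial n =
     (real n + 1 / 2) * harm_central_binomial n + central_binomial_ratio (Suc n)"
proof -
  have "diffs harm_central_binomial n =
          real (Suc n) * central_binomial_ratio (Suc n) * (harm n + inverse (real (Suc n)))"
    by (simp add: diffs_def harm_central_binomial_def harm_Suc)
  also have "\<dots> = (real n + 1 / 2) * central_binomial_ratio n * harm n + central_binomial_ratio (Suc n)"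
  proof -
    have "real (Suc n) * central_binomial_ratio (Suc n) * inverse (real (Suc n)) =
            central_binomial_ratio (Suc n)"
      by simp
    then show ?thesis by (simp only: distrib_left central_binomial_ratio_Suc)
  qed
  finally show ?thesis by (simp add: harm_central_binomial_def)
qed

lemma conv_radius_central_binomial_ratio: "1 \<le> conv_radius central_binomial_ratio"
  by (rule conv_radius_ge_1_mono[OF _ conv_radius_ge_1_const])
     (simp add: central_binomial_ratio_nonneg central_binomial_ratio_le_1)

lemma conv_radius_harm_central_binomial: "1 \<le> conv_radius harm_central_binomial"
proof (rule conv_radius_ge_1_mono[OF _ conv_radius_diffs_ge_1[OF conv_radius_ge_1_const]])
  show "\<bar>harm_central_binomial n\<bar> \<le> \<bar>diffs (\<lambda>_. 1) n\<bar>" for n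
    using harm_central_binomial_le[of n] harm_central_binomial_nonneg[of n] by (simp add: diffs_def)
qed

lemma central_binomial_power_series_ode:
  assumes "\<bar>x\<bar> < 1"
  shows "2 * (1 - x) * power_series (diffs central_binomial_ratio) x =
           power_series central_binomial_ratio x"
proof -
  note c = conv_radius_central_binomial_ratio
  have "(\<lambda>n. real n * central_binomial_ratio n * x ^ n + central_binomial_ratio n * x ^ n / 2)
          sums (x * power_series (diffs central_binomial_ratio) x + power_series central_binomial_ratio x / 2)"
    by (intro sums_add sums_divide sums_power_series_mult_of_nat sums_power_series c assms)
  moreover have "(\<lambda>n. diffs central_binomial_ratio n * x ^ n)
                   sums power_series (diffs central_binomial_ratio) x"
    by (intro sums_power_series conv_radius_diffs_ge_1 c assms)
  ultimately have "power_series (diffs central_binomial_ratio) x =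
      x * power_series (diffs central_binomial_ratio) x + power_series central_binomial_ratio x / 2"
    by (simp add: diffs_central_binomial_ratio algebra_simps sums_iff)
  then show ?thesis by (simp add: algebra_simps)
qed

lemma harm_central_binomial_power_series_ode:
  assumes "\<bar>x\<bar> < 1"
  shows "2 * (1 - x) * x * power_series (diffs harm_central_binomial) x =
           x * power_series harm_central_binomial x + 2 * (power_series central_binomial_ratio x - 1)"
proof -
  let ?h = harm_central_binomial and ?c = central_binomial_ratio
  note h = conv_radius_harm_central_binomial and c = conv_radius_central_binomial_ratio
  have "(\<lambda>n. ?c (Suc n) * x ^ Suc n) sums (power_series ?c x - 1)"
    using sums_power_series_Suc[OF c assms] by simp
  then have "(\<lambda>n. (real n * ?h n * x ^ n) * x + (?h n * x ^ n) * x / 2 + ?c (Suc n) * x ^ Suc n)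
          sums ((x * power_series (diffs ?h) x) * x + power_series ?h x * x / 2 + (power_series ?c x - 1))"
    by (intro sums_add sums_divide sums_mult2 sums_power_series_mult_of_nat sums_power_series
        h assms)
  moreover have "(\<lambda>n. diffs ?h n * x ^ n * x) sums (power_series (diffs ?h) x * x)"
    by (intro sums_mult2 sums_power_series conv_radius_diffs_ge_1 h assms)
  ultimately have "power_series (diffs ?h) x * x =
      x * power_series (diffs ?h) x * x + power_series ?h x * x / 2 + (power_series ?c x - 1)"
    by (simp add: diffs_harm_central_binomial algebra_simps sums_iff)
  then show ?thesis by (simp add: algebra_simps)
qed

section \<open>Closed forms after the substitution \<open>x = 4w/(1+w)\<^sup>2\<close>\<close>

definition quad_param :: "real \<Rightarrow> real" where
  "quad_param w = 4 * w / (1 + w)^2"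

lemma quad_param_0 [simp]: "quad_param 0 = 0"
  by (simp add: quad_param_def)

lemma one_minus_quad_param:
  assumes "w \<noteq> -1"
  shows "1 - quad_param w = ((1 - w) / (1 + w))^2"
proof -
  have "1 + w \<noteq> 0" using assms by auto
  then have "1 - quad_param w = ((1 + w)^2 - 4 * w) / (1 + w)^2"
    by (simp add: quad_param_def field_simps)
  also have "(1 + w)^2 - 4 * w = (1 - w)^2"
    by (simp add: power2_eq_square algebra_simps)
  finally show ?thesis by (simp add: power_divide)
qed

lemma quad_param_bounds:
  assumes "0 \<le> w" "w < 1"
  shows "0 \<le> quad_param w" "quad_param w < 1"
proof -
  have "0 < ((1 - w) / (1 + w))^2" using assms by simp
  moreover have "1 - quad_param w = ((1 - w) / (1 + w))^2" using assms by (simp add: one_minus_quad_param)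
  ultimately show "quad_param w < 1" by linarith
qed (use assms in \<open>simp add: quad_param_def\<close>)

lemma has_real_derivative_quad_param:
  assumes "w \<noteq> -1"
  shows "(quad_param has_real_derivative 4 * (1 - w) / (1 + w)^3) (at w)"
proof -
  have "1 + w \<noteq> 0" using assms by auto
  then show ?thesis
    unfolding quad_param_def[abs_def]
    by (auto intro!: derivative_eq_intros simp: divide_simps) algebra
qed

lemma filterlim_quad_param: "filterlim quad_param (at_left 1) (at_left 1)"
  unfolding quad_param_def by real_asymp

lemma has_real_derivative_power_series_quad_param:
  assumes "1 \<le> conv_radius a" "0 \<le> w" "w < 1"
  shows "((\<lambda>w. power_series a (quad_param w)) has_real_derivative
           power_series (diffs a) (quad_param w) * (4 * (1 - w) / (1 + w)^3)) (at w)"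
  using assms quad_param_bounds[of w]
  by (intro has_real_derivative_power_series_comp has_real_derivative_quad_param) auto

lemma has_real_derivative_mult_power_series_divide_Suc_quad_param:
  assumes "1 \<le> conv_radius a" "0 \<le> w" "w < 1"
  shows "((\<lambda>w. quad_param w * power_series (\<lambda>n. a n / (real n + 1)) (quad_param w)) has_real_derivative
           power_series a (quad_param w) * (4 * (1 - w) / (1 + w)^3)) (at w)"
  using assms quad_param_bounds[of w]
  by (intro has_real_derivative_mult_power_series_divide_Suc has_real_derivative_quad_param) auto

lemma power_series_central_binomial_quad_param:
  assumes "0 \<le> w" "w < 1"
  shows "power_series central_binomial_ratio (quad_param w) = (1 + w) / (1 - w)"
proof -
  let ?c = central_binomial_ratio
  let ?f' = "\<lambda>w. power_series (diffs ?c) (quad_param w) * (4 * (1 - w) / (1 + w)^3) * ((1 - w) / (1 + w))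
                + power_series ?c (quad_param w) * (- 2 / (1 + w)^2)"
  \<comment> \<open>\<open>(1 - w)/(1 + w) = sqrt (1 - x)\<close> is an integrating factor of the ODE\<close>
  have "power_series ?c (quad_param w) * ((1 - w) / (1 + w)) = 1"
  proof (rule DERIV_eq_imp_eq_on_Ico[of 0 1 "\<lambda>w. power_series ?c (quad_param w) * ((1 - w) / (1 + w))"
        ?f' "\<lambda>_. 1" "\<lambda>_. 0"])
    show "((\<lambda>w. power_series ?c (quad_param w) * ((1 - w) / (1 + w))) has_real_derivative ?f' v) (at v)"
      if "0 \<le> v" "v < 1" for v
      using that by (auto intro!: derivative_eq_intros has_real_derivative_power_series_quad_param
          conv_radius_central_binomial_ratio simp: divide_simps) algebra
    show "?f' v = 0" if "0 < v" "v < 1" for v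
    proof -
      have "2 * ((1 - v) / (1 + v))^2 * power_series (diffs ?c) (quad_param v) =
              power_series ?c (quad_param v)"
        using central_binomial_power_series_ode[of "quad_param v"] quad_param_bounds[of v]
          one_minus_quad_param[of v] that by simp
      then show ?thesis using that by (simp add: divide_simps) algebra
    qed
  qed (use assms in auto)
  then show ?thesis using assms by (simp add: field_simps)
qed

lemma power_series_harm_central_binomial_quad_param:
  assumes "0 \<le> w" "w < 1"
  shows "power_series harm_central_binomial (quad_param w) = - 2 * (1 + w) / (1 - w) * ln (1 - w)"
proof -
  let ?h = harm_central_binomial
  let ?f' = "\<lambda>w. power_series (diffs ?h) (quad_param w) * (4 * (1 - w) / (1 + w)^3) * ((1 - w) / (1 + w))
                + power_series ?h (quad_param w) * (- 2 / (1 + w)^2)"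
  have "power_series ?h (quad_param w) * ((1 - w) / (1 + w)) = - 2 * ln (1 - w)"
  proof (rule DERIV_eq_imp_eq_on_Ico[of 0 1 "\<lambda>w. power_series ?h (quad_param w) * ((1 - w) / (1 + w))"
        ?f' "\<lambda>w. - 2 * ln (1 - w)" "\<lambda>w. 2 / (1 - w)"])
    show "((\<lambda>w. power_series ?h (quad_param w) * ((1 - w) / (1 + w))) has_real_derivative ?f' v) (at v)"
      if "0 \<le> v" "v < 1" for v
      using that by (auto intro!: derivative_eq_intros has_real_derivative_power_series_quad_param
          conv_radius_harm_central_binomial simp: divide_simps) algebra
    show "((\<lambda>w. - 2 * ln (1 - w)) has_real_derivative 2 / (1 - v)) (at v)" if "0 \<le> v" "v < 1" for v
      using that by (auto intro!: derivative_eq_intros simp: divide_simps)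
    show "?f' v = 2 / (1 - v)" if "0 < v" "v < 1" for v
    proof -
      have q: "0 \<le> quad_param v" "quad_param v < 1" "1 - quad_param v = ((1 - v) / (1 + v))^2"
        using quad_param_bounds[of v] one_minus_quad_param[of v] that by auto
      have "2 * ((1 - v) / (1 + v))^2 * quad_param v * power_series (diffs ?h) (quad_param v) =
              quad_param v * power_series ?h (quad_param v) + 2 * ((1 + v) / (1 - v) - 1)"
        using harm_central_binomial_power_series_ode[of "quad_param v"] q
          power_series_central_binomial_quad_param[of v] that by simp
      moreover have "v \<noteq> 0" using that by simp
      ultimately show ?thesis
        using that by (simp add: quad_param_def divide_simps) (use \<open>v \<noteq> 0\<close> in algebra)
    qed
  qed (use assms in auto)
  then show ?thesis using assms by (simp add: field_simps)
qed

lemma power_series_harm_central_binomial_divide_quad_param: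
  assumes "0 \<le> w" "w < 1"
  shows "power_series (\<lambda>n. harm_central_binomial n / real n) (quad_param w) = 2 * dilog w"
proof -
  let ?F = "\<lambda>n. harm_central_binomial n / real n"
  have conv: "1 \<le> conv_radius ?F"
    by (rule conv_radius_ge_1_divide[OF conv_radius_harm_central_binomial]) auto
  show ?thesis
  proof (rule DERIV_eq_imp_eq_on_Ico[of 0 1 "\<lambda>w. power_series ?F (quad_param w)"
        "\<lambda>w. power_series (diffs ?F) (quad_param w) * (4 * (1 - w) / (1 + w)^3)"
        "\<lambda>w. 2 * dilog w" "\<lambda>w. 2 * power_series (\<lambda>n. 1 / (real n + 1)) w"])
    show "((\<lambda>w. power_series ?F (quad_param w)) has_real_derivative
            power_series (diffs ?F) (quad_param v) * (4 * (1 - v) / (1 + v)^3)) (at v)"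
      if "0 \<le> v" "v < 1" for v
      using that by (intro has_real_derivative_power_series_quad_param conv)
    show "((\<lambda>w. 2 * dilog w) has_real_derivative 2 * power_series (\<lambda>n. 1 / (real n + 1)) v) (at v)"
      if "0 \<le> v" "v < 1" for v
      using that by (intro DERIV_cmult has_real_derivative_dilog) auto
    show "power_series (diffs ?F) (quad_param v) * (4 * (1 - v) / (1 + v)^3) =
            2 * power_series (\<lambda>n. 1 / (real n + 1)) v" if "0 < v" "v < 1" for v
    proof -
      have "quad_param v * power_series (diffs ?F) (quad_param v) = - 2 * (1 + v) / (1 - v) * ln (1 - v)"
        using mult_power_series_diffs_divide_of_nat[OF conv_radius_harm_central_binomial, of "quad_param v"]
          quad_param_bounds[of v] power_series_harm_central_binomial_quad_param[of v] that by simp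
      moreover have "v * power_series (\<lambda>n. 1 / (real n + 1)) v = - ln (1 - v)"
        using mult_power_series_inverse_Suc[of v] that by simp
      moreover have "v \<noteq> 0" using that by simp
      ultimately show ?thesis
        using that by (simp add: quad_param_def divide_simps) (use \<open>v \<noteq> 0\<close> in algebra)
    qed
  qed (use assms in auto)
qed

lemma power_series_harm_central_binomial_divide_Suc_quad_param:
  assumes "0 \<le> w" "w < 1"
  shows "quad_param w * power_series (\<lambda>n. harm_central_binomial n / (real n + 1)) (quad_param w) =
           4 * (1 - w) / (1 + w) * ln (1 - w) + 4 * ln (1 + w)"
proof (rule DERIV_eq_imp_eq_on_Ico[of 0 1
      "\<lambda>w. quad_param w * power_series (\<lambda>n. harm_central_binomial n / (real n + 1)) (quad_param w)"
      "\<lambda>w. power_series harm_central_binomial (quad_param w) * (4 * (1 - w) / (1 + w)^3)"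
      "\<lambda>w. 4 * (1 - w) / (1 + w) * ln (1 - w) + 4 * ln (1 + w)" "\<lambda>w. - 8 * ln (1 - w) / (1 + w)^2"])
  show "((\<lambda>w. 4 * (1 - w) / (1 + w) * ln (1 - w) + 4 * ln (1 + w)) has_real_derivative
          - 8 * ln (1 - v) / (1 + v)^2) (at v)" if "0 \<le> v" "v < 1" for v
    using that by (auto intro!: derivative_eq_intros) (simp add: divide_simps, algebra)
  show "power_series harm_central_binomial (quad_param v) * (4 * (1 - v) / (1 + v)^3) =
          - 8 * ln (1 - v) / (1 + v)^2" if "0 < v" "v < 1" for v
    using that power_series_harm_central_binomial_quad_param[of v]
    by (simp add: divide_simps) algebra
qed (use assms has_real_derivative_mult_power_series_divide_Suc_quad_param
       conv_radius_harm_central_binomial in auto)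

lemma power_series_harm_central_binomial_divide_Suc_square_quad_param:
  assumes "0 \<le> w" "w < 1"
  shows "quad_param w * power_series (\<lambda>n. harm_central_binomial n / (real n + 1)^2) (quad_param w) =
           8 * (1 - w) / (1 + w) * ln (1 - w) + 8 * ln (1 + w) - 4 * ln (1 + w)^2 - 2 * dilog (w^2)"
proof -
  let ?B = "\<lambda>n. harm_central_binomial n / (real n + 1)"
  have square: "(\<lambda>n. harm_central_binomial n / (real n + 1)^2) = (\<lambda>n. ?B n / (real n + 1))"
    by (simp add: power2_eq_square)
  have conv: "1 \<le> conv_radius ?B"
    by (rule conv_radius_ge_1_divide[OF conv_radius_harm_central_binomial]) simp
  show ?thesis
    unfolding square
  proof (rule DERIV_eq_imp_eq_on_Ico[of 0 1
        "\<lambda>w. quad_param w * power_series (\<lambda>n. ?B n / (real n + 1)) (quad_param w)"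
        "\<lambda>w. power_series ?B (quad_param w) * (4 * (1 - w) / (1 + w)^3)"
        "\<lambda>w. 8 * (1 - w) / (1 + w) * ln (1 - w) + 8 * ln (1 + w) - 4 * ln (1 + w)^2 - 2 * dilog (w^2)"
        "\<lambda>w. - 16 * ln (1 - w) / (1 + w)^2 - 8 * ln (1 + w) / (1 + w)
               - 2 * (power_series (\<lambda>n. 1 / (real n + 1)) (w^2) * (2 * w))"])
    show "((\<lambda>w. 8 * (1 - w) / (1 + w) * ln (1 - w) + 8 * ln (1 + w) - 4 * ln (1 + w)^2 - 2 * dilog (w^2))
            has_real_derivative - 16 * ln (1 - v) / (1 + v)^2 - 8 * ln (1 + v) / (1 + v)
               - 2 * (power_series (\<lambda>n. 1 / (real n + 1)) (v^2) * (2 * v))) (at v)"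
      if "0 \<le> v" "v < 1" for v
    proof -
      have "\<bar>v^2\<bar> < 1" using that by (simp add: abs_square_less_1)
      then show ?thesis
        using that by (auto intro!: derivative_eq_intros DERIV_chain2[OF has_real_derivative_dilog])
          (simp add: divide_simps, algebra)
    qed
    show "power_series ?B (quad_param v) * (4 * (1 - v) / (1 + v)^3) =
            - 16 * ln (1 - v) / (1 + v)^2 - 8 * ln (1 + v) / (1 + v)
              - 2 * (power_series (\<lambda>n. 1 / (real n + 1)) (v^2) * (2 * v))" if "0 < v" "v < 1" for v
    proof -
      have "v \<noteq> 0" using that by simp
      then show ?thesis
        using that mult_power_series_inverse_Suc_square[of v]
          power_series_harm_central_binomial_divide_Suc_quad_param[of v]
        by (simp add: quad_param_def divide_simps) (use \<open>v \<noteq> 0\<close> in algebra)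
    qed
    show "((\<lambda>w. quad_param w * power_series (\<lambda>n. ?B n / (real n + 1)) (quad_param w))
            has_real_derivative power_series ?B (quad_param v) * (4 * (1 - v) / (1 + v)^3)) (at v)"
      if "0 \<le> v" "v < 1" for v
      using that by (rule has_real_derivative_mult_power_series_divide_Suc_quad_param[OF conv])
  qed (use assms in auto)
qed

lemma eventually_at_left_1_unit_interval: "\<forall>\<^sub>F w in at_left 1. 0 < w \<and> w < (1::real)"
  using eventually_at_left_real[of 0 "1::real"] by simp

lemma sums_harm_central_binomial_divide:
  "(\<lambda>n. harm_central_binomial n / real n) sums (pi^2 / 3)"
proof (rule nonneg_power_series_sums_if_tendsto[OF _ _ filterlim_quad_param])
  have "((\<lambda>w. 2 * dilog w) \<longlongrightarrow> 2 * (pi^2 / 6)) (at_left 1)"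
    by (intro tendsto_intros tendsto_dilog_at_left_1)
  moreover have "\<forall>\<^sub>F w in at_left 1.
      2 * dilog w = power_series (\<lambda>n. harm_central_binomial n / real n) (quad_param w)"
    using eventually_at_left_1_unit_interval
    by eventually_elim (simp add: power_series_harm_central_binomial_divide_quad_param)
  ultimately show "((\<lambda>w. power_series (\<lambda>n. harm_central_binomial n / real n) (quad_param w))
      \<longlongrightarrow> pi^2 / 3) (at_left 1)"
    by (simp add: tendsto_cong)
qed (auto simp: harm_central_binomial_nonneg
          intro!: conv_radius_ge_1_divide[OF conv_radius_harm_central_binomial])

lemma sums_harm_central_binomial_divide_Suc:
  "(\<lambda>n. harm_central_binomial n / (real n + 1)) sums (4 * ln 2)"
proof (rule nonneg_power_series_sums_if_tendsto[OF _ _ filterlim_quad_param])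
  have "((\<lambda>w. (4 * (1 - w) / (1 + w) * ln (1 - w) + 4 * ln (1 + w)) / quad_param w) \<longlongrightarrow> 4 * ln 2)
          (at_left 1)"
    unfolding quad_param_def by real_asymp
  moreover have "\<forall>\<^sub>F w in at_left 1.
      (4 * (1 - w) / (1 + w) * ln (1 - w) + 4 * ln (1 + w)) / quad_param w =
        power_series (\<lambda>n. harm_central_binomial n / (real n + 1)) (quad_param w)"
    using eventually_at_left_1_unit_interval
  proof eventually_elim
    case (elim w)
    then have "quad_param w \<noteq> 0" by (simp add: quad_param_def)
    moreover have "4 * (1 - w) / (1 + w) * ln (1 - w) + 4 * ln (1 + w) =
        quad_param w * power_series (\<lambda>n. harm_central_binomial n / (real n + 1)) (quad_param w)"
      using elim by (intro power_series_harm_central_binomial_divide_Suc_quad_param[symmetric]) auto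
    ultimately show ?case by simp
  qed
  ultimately show "((\<lambda>w. power_series (\<lambda>n. harm_central_binomial n / (real n + 1)) (quad_param w))
      \<longlongrightarrow> 4 * ln 2) (at_left 1)"
    by (simp add: tendsto_cong)
qed (auto simp: harm_central_binomial_nonneg
          intro!: conv_radius_ge_1_divide[OF conv_radius_harm_central_binomial])

lemma sums_harm_central_binomial_divide_Suc_square:
  "(\<lambda>n. harm_central_binomial n / (real n + 1)^2) sums (8 * ln 2 - 4 * ln 2 ^ 2 - pi^2 / 3)"
proof (rule nonneg_power_series_sums_if_tendsto[OF _ _ filterlim_quad_param])
  let ?R = "\<lambda>w. 8 * (1 - w) / (1 + w) * ln (1 - w) + 8 * ln (1 + w) - 4 * ln (1 + w)^2"
  have "((\<lambda>w. ?R w / quad_param w) \<longlongrightarrow> 8 * ln 2 - 4 * ln 2 ^ 2) (at_left 1)"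
    unfolding quad_param_def by real_asymp
  moreover have "((\<lambda>w. dilog (w^2)) \<longlongrightarrow> pi^2 / 6) (at_left 1)"
    by (rule filterlim_compose[OF tendsto_dilog_at_left_1]) real_asymp
  moreover have "(quad_param \<longlongrightarrow> 1) (at_left 1)"
    using filterlim_quad_param by (simp add: filterlim_at)
  ultimately have "((\<lambda>w. ?R w / quad_param w - 2 * dilog (w^2) / quad_param w) \<longlongrightarrow>
      8 * ln 2 - 4 * ln 2 ^ 2 - 2 * (pi^2 / 6) / 1) (at_left 1)"
    by (intro tendsto_intros) auto
  moreover have "\<forall>\<^sub>F w in at_left 1.
      ?R w / quad_param w - 2 * dilog (w^2) / quad_param w =
        power_series (\<lambda>n. harm_central_binomial n / (real n + 1)^2) (quad_param w)"
    using eventually_at_left_1_unit_interval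
  proof eventually_elim
    case (elim w)
    then have "quad_param w \<noteq> 0" by (simp add: quad_param_def)
    then have "?R w / quad_param w - 2 * dilog (w^2) / quad_param w = (?R w - 2 * dilog (w^2)) / quad_param w"
      by (simp add: diff_divide_distrib)
    also have "?R w - 2 * dilog (w^2) =
        quad_param w * power_series (\<lambda>n. harm_central_binomial n / (real n + 1)^2) (quad_param w)"
      using elim by (intro power_series_harm_central_binomial_divide_Suc_square_quad_param[symmetric]) auto
    also have "\<dots> / quad_param w =
        power_series (\<lambda>n. harm_central_binomial n / (real n + 1)^2) (quad_param w)"
      using \<open>quad_param w \<noteq> 0\<close> by simp
    finally show ?case .
  qed
  ultimately show "((\<lambda>w. power_series (\<lambda>n. harm_central_binomial n / (real n + 1)^2) (quad_param w))
      \<longlongrightarrow> 8 * ln 2 - 4 * ln 2 ^ 2 - pi^2 / 3) (at_left 1)"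
    by (simp add: tendsto_cong)
qed (auto simp: harm_central_binomial_nonneg
          intro!: conv_radius_ge_1_divide[OF conv_radius_harm_central_binomial])

lemma harm_central_binomial_partial_fractions:
  "harm_central_binomial n / real n - harm_central_binomial n / (real n + 1)
     - harm_central_binomial n / (real n + 1)^2 =
   harm n * real (2 * n choose n) / (real n * (real n + 1)^2 * 2 ^ (2 * n))"
proof (cases "n = 0")
  case False
  let ?r = "real n"
  have "harm_central_binomial n / ?r - harm_central_binomial n / (?r + 1)
          - harm_central_binomial n / (?r + 1)^2 =
        harm_central_binomial n * (1 / ?r - 1 / (?r + 1) - 1 / (?r + 1)^2)"
    by (simp add: right_diff_distrib)
  also have "1 / ?r - 1 / (?r + 1) - 1 / (?r + 1)^2 = 1 / (?r * (?r + 1)^2)"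
    using False by (simp add: divide_simps) algebra
  moreover have "(2::real) ^ (2 * n) = 4 ^ n" by (simp add: power_mult)
  ultimately show ?thesis
    by (simp add: harm_central_binomial_def central_binomial_ratio_def mult_ac)
qed simp

theorem mainTheorem5:
  shows "(\<lambda>m. let n = m + 1 in
            (harm n :: real) * real (2 * n choose n)
              / (real n * (real n + 1)^2 * 2 ^ (2 * n)))
         sums (2 * pi^2 / 3 + 4 * (ln 2)^2 - 12 * ln 2)"
proof -
  let ?t = "\<lambda>n. harm_central_binomial n / real n - harm_central_binomial n / (real n + 1)
                - harm_central_binomial n / (real n + 1)^2"
  have "?t sums (pi^2 / 3 - 4 * ln 2 - (8 * ln 2 - 4 * ln 2 ^ 2 - pi^2 / 3))"
    by (intro sums_diff sums_harm_central_binomial_divide sums_harm_central_binomial_divide_Suc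
        sums_harm_central_binomial_divide_Suc_square)
  then have "(\<lambda>m. ?t (Suc m)) sums (2 * pi^2 / 3 + 4 * (ln 2)^2 - 12 * ln 2)"
    by (subst sums_Suc_iff) (simp add: algebra_simps)
  then show ?thesis
    unfolding harm_central_binomial_partial_fractions Let_def Suc_eq_plus1 .
qed

end
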